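(* For $n\ge1$ and $k\in[n]$, let $a_{n,k}$ be the number of permutations $\pi\in\mathcal S_n$ avoiding $(123,\{0,2\},\emptyset)$ with $\pi_1=k$. Then \[a_{n,k}=\begin{cases}(k-1)!\,k^{\,n-k}&\text{for }k=1,2,\dots,n-2,\\ (n-1)!&\text{if }k=n-1\text{ or }k=n.\end{cases}\]
   Context: For $n\ge1$, $\mathcal S_n$ is the set of permutations $\pi=\pi_1\cdots\pi_n$ of $[n]$. A bi-vincular pattern of length $k$ is a triple $p=(\sigma,X,Y)$ with $\sigma\in\mathcal S_k$ and $X,Y\subseteq\{0,1,\dots,k\}$. A permutation $\pi\in\mathcal S_n$ contains $p$ if there are indices $1\le i_1<\dots<i_k\le n$ such that $(\pi_{i_1},\dots,\pi_{i_k})$ is order-isomorphic to $\sigma$ and, letting $j_1<\dots<j_k$ be the values $\pi_{i_1},\dots,\pi_{i_k}$ sorted increasingly and setting $i_0=j_0=0$, $i_{k+1}=j_{k+1}=n+1$, one has $i_{x+1}=i_x+1$ for all $x\in X$ and $j_{y+1}=j_y+1$ for all $y\in Y$. Otherwise $\pi$ avoids $p$. *)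

theory Defs
  imports Main "HOL-Combinatorics.Multiset_Permutations"
begin

(* Permutations of [n] are lists p = [pi_1,...,pi_n] (one-line notation);
   pi_i is written  p ! (i - 1). A bi-vincular pattern is (sigma, X, Y) with
   sigma a permutation of [k] given as a list. *)

definition perms :: "nat \<Rightarrow> nat list set" where
  "perms n = permutations_of_set {1..n}"

definition order_iso :: "nat list \<Rightarrow> nat list \<Rightarrow> bool" where
  "order_iso xs ys \<longleftrightarrow> length xs = length ys \<and>
     (\<forall>a < length xs. \<forall>b < length xs. (xs ! a < xs ! b \<longleftrightarrow> ys ! a < ys ! b))"

(* p contains the bi-vincular pattern (sigma, X, Y).
   ii : indices i_1 < ... < i_k (1-based), extended by i_0 = 0, i_(k+1) = n+1;
   jj : the values pi_(i_1),...,pi_(i_k) sorted increasingly, extended by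
        j_0 = 0, j_(k+1) = n+1. *)
definition contains_bv :: "nat list \<Rightarrow> nat list \<Rightarrow> nat set \<Rightarrow> nat set \<Rightarrow> bool" where
  "contains_bv p sigma X Y \<longleftrightarrow>
     (let n = length p; k = length sigma in
      \<exists>i :: nat \<Rightarrow> nat.
        (\<forall>t \<in> {1..k}. 1 \<le> i t \<and> i t \<le> n) \<and>
        (\<forall>s \<in> {1..k}. \<forall>t \<in> {1..k}. s < t \<longrightarrow> i s < i t) \<and>
        (let vals = map (\<lambda>t. p ! (i t - 1)) [1..<k+1];
             js = sort vals;
             ii = (\<lambda>x. if x = 0 then 0 else if x = k + 1 then n + 1 else i x);
             jj = (\<lambda>y. if y = 0 then 0 else if y = k + 1 then n + 1 else js ! (y - 1))
         in order_iso vals sigma \<and>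
            (\<forall>x \<in> X. ii (x + 1) = ii x + 1) \<and>
            (\<forall>y \<in> Y. jj (y + 1) = jj y + 1)))"

definition avoids_bv :: "nat list \<Rightarrow> nat list \<Rightarrow> nat set \<Rightarrow> nat set \<Rightarrow> bool" where
  "avoids_bv p sigma X Y \<longleftrightarrow> \<not> contains_bv p sigma X Y"

definition a_nk :: "nat \<Rightarrow> nat \<Rightarrow> nat" where
  "a_nk n k = card {p \<in> perms n. avoids_bv p [1,2,3] {0,2} {} \<and> p ! 0 = k}"

end

theory Submission
  imports Defs
begin

text \<open>Write a permutation as k # xs. An occurrence of the pattern is an adjacent ascent
  xs ! j < xs ! (j + 1) with k < xs ! j, so the permutation avoids it iff in xs every entry above k
  is followed by a smaller one unless it comes last. Such arrangements of a set S are built by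
  inserting the elements above k in increasing order: the current maximum v may go to the front or
  directly after an entry below k, and since v exceeds everything else this choice never interacts
  with the rest of the word. That gives card {x \<in> S. x < k} + 1 slots per large element, and the
  entries below k are arranged freely; for S = {1..n} - {k} the count is (k - 1)! * k ^ (n - k),
  which equals (n - 1)! when k \<ge> n - 1.\<close>

lemma order_iso_123_iff: "order_iso [a, b, c] [1, 2, 3] \<longleftrightarrow> a < b \<and> b < c"
  unfolding order_iso_def by (auto simp: less_Suc_eq numeral_3_eq_3 numeral_2_eq_2)

lemma atLeastAtMost_1_3: "{1..3::nat} = {1, 2, 3}"
  by (auto simp: numeral_3_eq_3)

lemma contains_123_iff:
  "contains_bv p [1,2,3] {0,2} {} \<longleftrightarrow>
   (\<exists>j. 1 \<le> j \<and> j + 1 < length p \<and> p ! 0 < p ! j \<and> p ! j < p ! (j + 1))"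
proof -
  have length_123: "length [1,2,3::nat] = 3" by simp
  have upt_123: "[1..<3 + 1] = [1,2,3::nat]" by (simp add: upt_rec)
  (* X = {0,2} forces i 1 = 1 and i 3 = i 2 + 1 (positions are 1-based), so j = i 2 - 1 *)
  show ?thesis
    unfolding contains_bv_def Let_def length_123 upt_123 atLeastAtMost_1_3
    apply (simp only: list.map order_iso_123_iff)
    apply (simp; intro iffI; elim exE conjE)
    subgoal for i by (rule exI[of _ "i 2 - 1"]) simp
    subgoal for j by (rule exI[of _ "\<lambda>t. if t = 1 then 1 else j + t - 1"]) simp
    done
qed

fun descends_above :: "nat \<Rightarrow> nat list \<Rightarrow> bool" where
  "descends_above k [] = True"
| "descends_above k (x # xs) \<longleftrightarrow> (k < x \<and> xs \<noteq> [] \<longrightarrow> hd xs < x) \<and> descends_above k xs"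

lemma descends_above_iff_nth:
  "descends_above k xs \<longleftrightarrow> (\<forall>j. j + 1 < length xs \<longrightarrow> k < xs ! j \<longrightarrow> xs ! (j + 1) < xs ! j)"
proof (induction xs)
  case Nil
  then show ?case by simp
next
  case (Cons x xs)
  have "(\<forall>j. j + 1 < length (x # xs) \<longrightarrow> k < (x # xs) ! j \<longrightarrow> (x # xs) ! (j + 1) < (x # xs) ! j)
    \<longleftrightarrow> (k < x \<and> xs \<noteq> [] \<longrightarrow> hd xs < x) \<and>
        (\<forall>j. j + 1 < length xs \<longrightarrow> k < xs ! j \<longrightarrow> xs ! (j + 1) < xs ! j)"
    (is "?all \<longleftrightarrow> ?head \<and> ?tail")
  proof
    assume ?all
    then show "?head \<and> ?tail"
      using spec[OF \<open>?all\<close>, of 0] by (auto simp: hd_conv_nth dest: spec[of _ "Suc _"])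
  next
    assume "?head \<and> ?tail"
    show ?all
    proof (intro allI impI)
      fix j assume "j + 1 < length (x # xs)" "k < (x # xs) ! j"
      with \<open>?head \<and> ?tail\<close> show "(x # xs) ! (j + 1) < (x # xs) ! j"
        by (cases j) (auto simp: hd_conv_nth)
    qed
  qed
  with Cons.IH show ?case by simp
qed

lemma avoids_123_iff_descends_above:
  assumes "distinct (k # xs)"
  shows "avoids_bv (k # xs) [1,2,3] {0,2} {} \<longleftrightarrow> descends_above k xs"
proof -
  have "contains_bv (k # xs) [1,2,3] {0,2} {} \<longleftrightarrow>
      (\<exists>j. j + 1 < length xs \<and> k < xs ! j \<and> xs ! j < xs ! (j + 1))"
    unfolding contains_123_iff
  proof (intro iffI; elim exE conjE)
    fix j assume "1 \<le> j" "j + 1 < length (k # xs)"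
      "(k # xs) ! 0 < (k # xs) ! j" "(k # xs) ! j < (k # xs) ! (j + 1)"
    then show "\<exists>j. j + 1 < length xs \<and> k < xs ! j \<and> xs ! j < xs ! (j + 1)"
      by (intro exI[of _ "j - 1"]) (cases j; simp)
  next
    fix j assume "j + 1 < length xs" "k < xs ! j" "xs ! j < xs ! (j + 1)"
    then show "\<exists>j\<ge>1. j + 1 < length (k # xs) \<and> (k # xs) ! 0 < (k # xs) ! j \<and>
        (k # xs) ! j < (k # xs) ! (j + 1)"
      by (intro exI[of _ "Suc j"]) simp
  qed
  moreover have "xs ! j \<noteq> xs ! (j + 1)" if "j + 1 < length xs" for j
    using assms that by (auto simp: nth_eq_iff_index_eq)
  ultimately show ?thesis
    unfolding avoids_bv_def descends_above_iff_nth by (meson linorder_neqE_nat not_less_iff_gr_or_eq)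
qed

lemma descends_above_if_all_le: "\<forall>x\<in>set xs. x \<le> k \<Longrightarrow> descends_above k xs"
  by (induction xs) auto

lemma descends_above_insert_max:
  assumes "\<forall>x\<in>set (us @ ws). x < v" and "k < v"
  shows "descends_above k (us @ v # ws) \<longleftrightarrow>
    descends_above k (us @ ws) \<and> (us = [] \<or> last us \<le> k)"
  using assms
proof (induction us)
  case Nil
  then show ?case by (cases ws) auto
next
  case (Cons u us)
  then show ?case by (cases us) auto
qed

definition insert_at :: "nat \<Rightarrow> 'a \<Rightarrow> 'a list \<Rightarrow> 'a list" where
  "insert_at i v xs = take i xs @ v # drop i xs"

lemma mset_insert_at [simp]: "mset (insert_at i v xs) = add_mset v (mset xs)"
  unfolding insert_at_def by (metis add_mset_add_single append_take_drop_id mset_append mset.simps(2)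
      union_mset_add_mset_right)

lemma set_insert_at [simp]: "set (insert_at i v xs) = insert v (set xs)"
  by (metis mset_insert_at set_mset_mset set_mset_add_mset_insert)

lemma distinct_insert_at [simp]: "distinct (insert_at i v xs) \<longleftrightarrow> v \<notin> set xs \<and> distinct xs"
  by (metis distinct.simps(2) mset_insert_at mset.simps(2) mset_eq_imp_distinct_iff)

lemma inj_on_insert_at:
  "inj_on (\<lambda>(xs, i). insert_at i v xs) {(xs, i). v \<notin> set xs \<and> i \<le> length xs}"
proof (rule inj_onI, clarify)
  fix xs i ys j
  assume "v \<notin> set xs" "i \<le> length xs" "v \<notin> set ys" "j \<le> length ys"
    and "insert_at i v xs = insert_at j v ys"
  then have "take i xs = take j ys" "drop i xs = drop j ys"
    unfolding insert_at_def
    using append_Cons_eq_iff[of v "take i xs" "drop i xs" "take j ys" "drop j ys"]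
    by (auto dest: in_set_takeD in_set_dropD)
  then show "xs = ys \<and> i = j"
    using \<open>i \<le> length xs\<close> \<open>j \<le> length ys\<close> by (metis append_take_drop_id length_take min.absorb2)
qed

definition descending_above_perms :: "nat \<Rightarrow> nat set \<Rightarrow> nat list set" where
  "descending_above_perms k S = {xs \<in> permutations_of_set S. descends_above k xs}"

definition insertion_slots :: "nat \<Rightarrow> nat list \<Rightarrow> nat set" where
  "insertion_slots k xs = {i. i \<le> length xs \<and> (i = 0 \<or> xs ! (i - 1) \<le> k)}"

lemma card_insertion_slots:
  assumes "distinct xs" and "k \<notin> set xs"
  shows "card (insertion_slots k xs) = card {x \<in> set xs. x < k} + 1"
proof -
  have "insertion_slots k xs = insert 0 (Suc ` {j. j < length xs \<and> xs ! j \<le> k})"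
  proof (intro equalityI subsetI)
    fix i assume "i \<in> insertion_slots k xs"
    then show "i \<in> insert 0 (Suc ` {j. j < length xs \<and> xs ! j \<le> k})"
      unfolding insertion_slots_def by (cases i) auto
  qed (auto simp: insertion_slots_def)
  then have "card (insertion_slots k xs) = card {j. j < length xs \<and> xs ! j \<le> k} + 1"
    by (simp add: card_image)
  also have "card {j. j < length xs \<and> xs ! j \<le> k} = length (filter (\<lambda>x. x \<le> k) xs)"
    by (simp add: length_filter_conv_card)
  also have "\<dots> = card (set (filter (\<lambda>x. x \<le> k) xs))"
    using assms(1) by (metis distinct_card distinct_filter)
  also have "set (filter (\<lambda>x. x \<le> k) xs) = {x \<in> set xs. x < k}"
    using assms(2) by (auto simp: order.order_iff_strict)
  finally show ?thesis .
qed

lemma descends_above_insert_at: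
  assumes "\<forall>x\<in>set xs. x < v" and "k < v" and "i \<le> length xs"
  shows "descends_above k (insert_at i v xs) \<longleftrightarrow> descends_above k xs \<and> i \<in> insertion_slots k xs"
proof -
  have "take i xs = [] \<or> last (take i xs) \<le> k \<longleftrightarrow> i = 0 \<or> xs ! (i - 1) \<le> k"
    using assms(3) by (cases i) (auto simp: take_Suc_conv_app_nth)
  then show ?thesis
    using descends_above_insert_max[of "take i xs" "drop i xs" v k] assms
    by (simp add: insert_at_def insertion_slots_def)
qed

lemma descending_above_perms_insert_max:
  assumes "v \<in> S" and "\<forall>x\<in>S. x \<le> v" and "k < v"
  shows "descending_above_perms k S =
    (\<lambda>(xs, i). insert_at i v xs) ` (SIGMA xs:descending_above_perms k (S - {v}). insertion_slots k xs)"
proof (intro equalityI subsetI)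
  fix ys assume "ys \<in> descending_above_perms k S"
  then have ys: "set ys = S" "distinct ys" "descends_above k ys"
    by (auto simp: descending_above_perms_def permutations_of_set_def)
  then obtain us ws where ys_split: "ys = us @ v # ws"
    using assms(1) by (metis split_list)
  define xs where "xs = us @ ws"
  have ys_eq: "ys = insert_at (length us) v xs"
    by (simp add: ys_split xs_def insert_at_def)
  have xs: "set xs = S - {v}" "distinct xs"
    using ys(1,2) by (auto simp: ys_eq)
  then have "\<forall>x\<in>set xs. x < v"
    using assms(2) by force
  then have "descends_above k xs" "length us \<in> insertion_slots k xs"
    using descends_above_insert_at[of xs v k "length us"] assms(3) ys(3)
    by (simp_all add: ys_eq xs_def)
  with xs show "ys \<in> (\<lambda>(xs, i). insert_at i v xs) `
      (SIGMA xs:descending_above_perms k (S - {v}). insertion_slots k xs)"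
    unfolding ys_eq descending_above_perms_def by auto
next
  fix ys assume "ys \<in> (\<lambda>(xs, i). insert_at i v xs) `
      (SIGMA xs:descending_above_perms k (S - {v}). insertion_slots k xs)"
  then obtain xs i where xs: "set xs = S - {v}" "distinct xs" "descends_above k xs"
    and i: "i \<in> insertion_slots k xs" and ys_eq: "ys = insert_at i v xs"
    by (auto simp: descending_above_perms_def permutations_of_set_def)
  have "\<forall>x\<in>set xs. x < v"
    using xs(1) assms(2) by force
  then have "descends_above k ys"
    using descends_above_insert_at[of xs v k i] assms(3) xs(3) i
    by (simp add: ys_eq insertion_slots_def)
  moreover have "set ys = S" "distinct ys"
    using xs assms(1) by (auto simp: ys_eq)
  ultimately show "ys \<in> descending_above_perms k S"
    by (simp add: descending_above_perms_def permutations_of_set_def)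
qed

lemma card_descending_above_perms:
  assumes "finite S" and "k \<notin> S"
  shows "card (descending_above_perms k S) =
    fact (card {x \<in> S. x < k}) * (card {x \<in> S. x < k} + 1) ^ card {x \<in> S. k < x}"
  using assms
proof (induction "card {x \<in> S. k < x}" arbitrary: S)
  case 0
  then have none_above: "{x \<in> S. k < x} = {}"
    by simp
  then have "descending_above_perms k S = permutations_of_set S"
    by (auto simp: descending_above_perms_def permutations_of_set_def not_less
        intro: descends_above_if_all_le)
  moreover have "{x \<in> S. x < k} = S"
    using none_above \<open>k \<notin> S\<close> by (auto simp: not_less order.order_iff_strict)
  ultimately show ?case
    using \<open>finite S\<close> by (simp add: none_above)
next
  case (Suc m S)
  define v where "v = Max S"
  obtain w where "w \<in> S" "k < w"
    using Suc.hyps(2) by (metis (mono_tags, lifting) card.empty empty_Collect_eq nat.distinct(1))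
  have v: "v \<in> S" "\<forall>x\<in>S. x \<le> v" "k < v"
    using Max_in[OF Suc.prems(1)] Max_ge[OF Suc.prems(1)] \<open>w \<in> S\<close> \<open>k < w\<close>
    unfolding v_def by (blast, blast, fastforce)
  have small: "{x \<in> S - {v}. x < k} = {x \<in> S. x < k}"
    using v(3) by auto
  have "{x \<in> S - {v}. k < x} = {x \<in> S. k < x} - {v}"
    by auto
  then have "card {x \<in> S - {v}. k < x} = m"
    using Suc.hyps(2)[symmetric] Suc.prems(1) v by (simp add: card_Diff_singleton)
  then have IH: "card (descending_above_perms k (S - {v})) =
      fact (card {x \<in> S. x < k}) * (card {x \<in> S. x < k} + 1) ^ m"
    using Suc.hyps(1)[of "S - {v}"] Suc.prems small by simp
  have inj: "inj_on (\<lambda>(xs, i). insert_at i v xs)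
      (SIGMA xs:descending_above_perms k (S - {v}). insertion_slots k xs)"
    by (rule inj_on_subset[OF inj_on_insert_at])
      (auto simp: descending_above_perms_def permutations_of_set_def insertion_slots_def)
  have "card (descending_above_perms k S) =
      card (SIGMA xs:descending_above_perms k (S - {v}). insertion_slots k xs)"
    unfolding descending_above_perms_insert_max[OF v] by (rule card_image[OF inj])
  also have "\<dots> = (\<Sum>xs\<in>descending_above_perms k (S - {v}). card (insertion_slots k xs))"
    by (rule card_SigmaI) (auto simp: descending_above_perms_def insertion_slots_def)
  also have "\<dots> = (\<Sum>xs\<in>descending_above_perms k (S - {v}). card {x \<in> S. x < k} + 1)"
  proof (rule sum.cong)
    fix xs assume "xs \<in> descending_above_perms k (S - {v})"
    then have "set xs = S - {v}" "distinct xs"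
      by (auto simp: descending_above_perms_def permutations_of_set_def)
    then show "card (insertion_slots k xs) = card {x \<in> S. x < k} + 1"
      using card_insertion_slots[of xs k] Suc.prems(2) small by simp
  qed simp
  also have "\<dots> = card (descending_above_perms k (S - {v})) * (card {x \<in> S. x < k} + 1)"
    by simp
  finally show ?case
    unfolding IH Suc.hyps(2)[symmetric] by (simp only: power_Suc ac_simps)
qed

lemma permutations_of_set_starting_with:
  assumes "x \<in> A"
  shows "{xs \<in> permutations_of_set A. xs ! 0 = x} = (#) x ` permutations_of_set (A - {x})"
proof (intro equalityI subsetI)
  fix xs assume "xs \<in> {xs \<in> permutations_of_set A. xs ! 0 = x}"
  then have xs: "set xs = A" "distinct xs" "xs ! 0 = x"
    by (auto simp: permutations_of_set_def)
  then obtain ys where "xs = x # ys"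
    using assms by (cases xs) auto
  with xs show "xs \<in> (#) x ` permutations_of_set (A - {x})"
    by (auto simp: permutations_of_set_def)
next
  fix xs assume "xs \<in> (#) x ` permutations_of_set (A - {x})"
  then obtain ys where "xs = x # ys" "set ys = A - {x}" "distinct ys"
    by (auto simp: permutations_of_set_def)
  with assms show "xs \<in> {xs \<in> permutations_of_set A. xs ! 0 = x}"
    by (auto simp: permutations_of_set_def)
qed

lemma a_nk_eq_card_descending_above_perms:
  assumes "k \<in> {1..n}"
  shows "a_nk n k = card (descending_above_perms k ({1..n} - {k}))"
proof -
  have "{p \<in> perms n. avoids_bv p [1,2,3] {0,2} {} \<and> p ! 0 = k} =
      {p \<in> (#) k ` permutations_of_set ({1..n} - {k}). avoids_bv p [1,2,3] {0,2} {}}"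
    using permutations_of_set_starting_with[OF assms] unfolding perms_def by blast
  also have "\<dots> = (#) k ` descending_above_perms k ({1..n} - {k})"
    using avoids_123_iff_descends_above
    by (auto simp: descending_above_perms_def permutations_of_set_def)
  finally show ?thesis
    unfolding a_nk_def by (simp add: card_image)
qed

theorem mainTheorem11:
  fixes n k :: nat
  assumes "n \<ge> 1" and "1 \<le> k" and "k \<le> n"
  shows "a_nk n k = (if k \<le> n - 2 then fact (k - 1) * k ^ (n - k) else fact (n - 1))"
proof -
  have "{x \<in> {1..n} - {k}. x < k} = {1..<k}" "{x \<in> {1..n} - {k}. k < x} = {k<..n}"
    using assms by auto
  then have "a_nk n k = fact (k - 1) * k ^ (n - k)"
    using a_nk_eq_card_descending_above_perms card_descending_above_perms[of "{1..n} - {k}" k] assms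
    by simp
  moreover have "fact (k - 1) * k ^ (n - k) = (fact (n - 1) :: nat)" if "n - 2 < k"
  proof -
    from that assms consider "k = n" | "k = n - 1" "n \<ge> 2" by linarith
    then show ?thesis
      by cases (auto simp: fact_reduce)
  qed
  ultimately show ?thesis by auto
qed

end
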